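(* Let $N>0$, $m>0$, $F>0$, $\alpha>0$, $w>0$ be fixed with $Nm>\alpha$, and for $g\geq 0$, $\tau\in(0,1)$, $L_g\geq 0$ define \[ L=\frac{N\left[(1-\tau)(mL_g+\alpha F)+(mg+F)mN\right]}{\alpha+(Nm-\alpha)\tau},\qquad p=\frac{L+L_g}{L+L_g-\alpha g}\left(mw+\frac{\alpha(1-\tau)w}{N}\right), \] regarded as functions of $(g,\tau,L_g)$. Then \[ \frac{\partial p}{\partial g}>0,\qquad \frac{\partial p}{\partial \tau}<0,\qquad \frac{\partial p}{\partial L_g}\leq 0 . \]
   Context: $L$ is equilibrium private employment and $p$ the equilibrium price of every variety in a monopolistic-competition general equilibrium model with a measure $N$ of firms, marginal and fixed labor inputs $m$ and $F$, CARA utility parameter $\alpha$, nominal wage $w$, income tax rate $\tau$, government purchase $g$ of each variety, and government employment $L_g$. Equivalently $p=mw(L+L_g)/(L+L_g-\alpha((L+L_g)q+g))$ with $q=(1-\tau)(L+L_g-\alpha g)/((Nm+\alpha(1-\tau))(L+L_g))$. Partial derivatives are taken in $(g,\tau,L_g)$ with other parameters fixed. *)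

theory Defs
  imports Complex_Main
begin

definition Lemp :: "real \<Rightarrow> real \<Rightarrow> real \<Rightarrow> real \<Rightarrow> real \<Rightarrow> real \<Rightarrow> real \<Rightarrow> real" where
  "Lemp N m F \<alpha> g \<tau> Lg =
     N * ((1 - \<tau>) * (m * Lg + \<alpha> * F) + (m * g + F) * m * N) / (\<alpha> + (N * m - \<alpha>) * \<tau>)"

definition price :: "real \<Rightarrow> real \<Rightarrow> real \<Rightarrow> real \<Rightarrow> real \<Rightarrow> real \<Rightarrow> real \<Rightarrow> real \<Rightarrow> real" where
  "price N m F \<alpha> w g \<tau> Lg =
     (Lemp N m F \<alpha> g \<tau> Lg + Lg) / (Lemp N m F \<alpha> g \<tau> Lg + Lg - \<alpha> * g)
       * (m * w + \<alpha> * (1 - \<tau>) * w / N)"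

end

theory Submission
  imports Defs
begin

text \<open>Write \<open>B = N m + \<alpha> (1 - \<tau>)\<close>, \<open>D = \<alpha> + (N m - \<alpha>) \<tau>\<close> and \<open>K = L\<^sub>g + N F\<close>. Then
  \<open>L + L\<^sub>g = (B K + (N m)\<^sup>2 g) / D\<close>, and since \<open>(N m)\<^sup>2 - \<alpha> D = (N m - \<alpha>) B\<close> also
  \<open>L + L\<^sub>g - \<alpha> g = B (K + (N m - \<alpha>) g) / D\<close>. The factors \<open>D\<close> and \<open>B\<close> cancel, leaving
  \<open>p = (w / N) (B K + (N m)\<^sup>2 g) / (K + (N m - \<alpha>) g)\<close>: a linear fractional function of \<open>g\<close>
  and of \<open>L\<^sub>g\<close>, and an affine, decreasing function of \<open>\<tau>\<close>, whose derivatives have the sign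
  of \<open>\<alpha> D K\<close>, \<open>-\<alpha> D g\<close> and \<open>-\<alpha> K\<close> respectively.\<close>

lemma price_closed_form:
  fixes N m F \<alpha> w g \<tau> Lg :: real
  assumes "N \<noteq> 0" "\<alpha> + (N * m - \<alpha>) * \<tau> \<noteq> 0" "N * m + \<alpha> * (1 - \<tau>) \<noteq> 0"
  shows "price N m F \<alpha> w g \<tau> Lg =
    w / N * (((N * m + \<alpha> * (1 - \<tau>)) * (Lg + N * F) + (N * m)\<^sup>2 * g) / (Lg + N * F + (N * m - \<alpha>) * g))"
proof -
  define B where "B = N * m + \<alpha> * (1 - \<tau>)"
  define D where "D = \<alpha> + (N * m - \<alpha>) * \<tau>"
  define K where "K = Lg + N * F"
  have "D \<noteq> 0" "B \<noteq> 0" using assms by (simp_all add: B_def D_def)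
  have total: "Lemp N m F \<alpha> g \<tau> Lg + Lg = (B * K + (N * m)\<^sup>2 * g) / D"
    using \<open>D \<noteq> 0\<close> unfolding Lemp_def B_def D_def K_def by (simp add: field_simps power2_eq_square)
  have "Lemp N m F \<alpha> g \<tau> Lg + Lg - \<alpha> * g = (B * K + ((N * m)\<^sup>2 - \<alpha> * D) * g) / D"
    using \<open>D \<noteq> 0\<close> unfolding total by (simp add: field_simps)
  also have "(N * m)\<^sup>2 - \<alpha> * D = (N * m - \<alpha>) * B"
    unfolding B_def D_def by (simp add: algebra_simps power2_eq_square)
  finally have net: "Lemp N m F \<alpha> g \<tau> Lg + Lg - \<alpha> * g = B * (K + (N * m - \<alpha>) * g) / D"
    by (simp add: algebra_simps)
  have wage: "m * w + \<alpha> * (1 - \<tau>) * w / N = w / N * B"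
    using assms(1) unfolding B_def by (simp add: field_simps)
  show ?thesis
    unfolding price_def net unfolding total wage B_def [symmetric] K_def [symmetric]
    using \<open>D \<noteq> 0\<close> \<open>B \<noteq> 0\<close> by (simp add: ac_simps)
qed

lemma has_real_derivative_linear_fractional:
  fixes a b c d x :: real
  assumes "c * x + d \<noteq> 0"
  shows "((\<lambda>x. (a * x + b) / (c * x + d)) has_real_derivative (a * d - b * c) / (c * x + d)\<^sup>2) (at x)"
  using assms by (auto intro!: derivative_eq_intros simp: field_simps power2_eq_square)

lemma price_has_derivative_gov_purchase:
  fixes N m F \<alpha> w g \<tau> Lg :: real
  assumes "N \<noteq> 0" "\<alpha> + (N * m - \<alpha>) * \<tau> \<noteq> 0" "N * m + \<alpha> * (1 - \<tau>) \<noteq> 0"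
    and "Lg + N * F + (N * m - \<alpha>) * g \<noteq> 0"
  shows "((\<lambda>x. price N m F \<alpha> w x \<tau> Lg) has_real_derivative
    w / N * (\<alpha> * (\<alpha> + (N * m - \<alpha>) * \<tau>) * (Lg + N * F) / (Lg + N * F + (N * m - \<alpha>) * g)\<^sup>2)) (at g)"
proof -
  define B where "B = N * m + \<alpha> * (1 - \<tau>)"
  define K where "K = Lg + N * F"
  have price: "(\<lambda>x. price N m F \<alpha> w x \<tau> Lg) =
      (\<lambda>x. w / N * (((N * m)\<^sup>2 * x + B * K) / ((N * m - \<alpha>) * x + K)))"
    using assms(1-3) by (simp add: price_closed_form B_def K_def add.commute)
  have "((\<lambda>x. w / N * (((N * m)\<^sup>2 * x + B * K) / ((N * m - \<alpha>) * x + K))) has_real_derivative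
      w / N * (((N * m)\<^sup>2 * K - B * K * (N * m - \<alpha>)) / ((N * m - \<alpha>) * g + K)\<^sup>2)) (at g)"
    using assms(4) by (intro DERIV_cmult has_real_derivative_linear_fractional) (simp add: K_def add.commute)
  also have "(N * m)\<^sup>2 * K - B * K * (N * m - \<alpha>) = \<alpha> * (\<alpha> + (N * m - \<alpha>) * \<tau>) * K"
    unfolding B_def by (simp add: algebra_simps power2_eq_square)
  finally show ?thesis
    unfolding price K_def [symmetric] by (simp only: add.commute)
qed

lemma price_has_derivative_gov_employment:
  fixes N m F \<alpha> w g \<tau> Lg :: real
  assumes "N \<noteq> 0" "\<alpha> + (N * m - \<alpha>) * \<tau> \<noteq> 0" "N * m + \<alpha> * (1 - \<tau>) \<noteq> 0"
    and "Lg + N * F + (N * m - \<alpha>) * g \<noteq> 0"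
  shows "((\<lambda>l. price N m F \<alpha> w g \<tau> l) has_real_derivative
    w / N * (- (\<alpha> * (\<alpha> + (N * m - \<alpha>) * \<tau>) * g) / (Lg + N * F + (N * m - \<alpha>) * g)\<^sup>2)) (at Lg)"
proof -
  define B where "B = N * m + \<alpha> * (1 - \<tau>)"
  define E where "E = N * F + (N * m - \<alpha>) * g"
  have price: "(\<lambda>l. price N m F \<alpha> w g \<tau> l) =
      (\<lambda>l. w / N * ((B * l + (B * N * F + (N * m)\<^sup>2 * g)) / (1 * l + E)))"
    using assms(1-3) by (simp add: price_closed_form B_def E_def algebra_simps)
  have den: "1 * Lg + E = Lg + N * F + (N * m - \<alpha>) * g"
    unfolding E_def by simp
  have "((\<lambda>l. w / N * ((B * l + (B * N * F + (N * m)\<^sup>2 * g)) / (1 * l + E))) has_real_derivative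
      w / N * ((B * E - (B * N * F + (N * m)\<^sup>2 * g) * 1) / (1 * Lg + E)\<^sup>2)) (at Lg)"
    using assms(4) by (intro DERIV_cmult has_real_derivative_linear_fractional) (simp add: E_def add.assoc)
  also have "B * E - (B * N * F + (N * m)\<^sup>2 * g) * 1 = - (\<alpha> * (\<alpha> + (N * m - \<alpha>) * \<tau>) * g)"
    unfolding B_def E_def by (simp add: algebra_simps power2_eq_square)
  finally show ?thesis
    unfolding price den .
qed

lemma price_has_derivative_tax_rate:
  fixes N m F \<alpha> w g \<tau> Lg :: real
  assumes "N \<noteq> 0" "\<alpha> + (N * m - \<alpha>) * \<tau> \<noteq> 0" "N * m + \<alpha> * (1 - \<tau>) \<noteq> 0"
  shows "((\<lambda>t. price N m F \<alpha> w g t Lg) has_real_derivative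
    w / N * (- (\<alpha> * (Lg + N * F)) / (Lg + N * F + (N * m - \<alpha>) * g))) (at \<tau>)"
proof -
  let ?S = "{t. \<alpha> + (N * m - \<alpha>) * t \<noteq> 0} \<inter> {t. N * m + \<alpha> * (1 - t) \<noteq> 0}"
  have "((\<lambda>t. w / N * (((N * m + \<alpha> * (1 - t)) * (Lg + N * F) + (N * m)\<^sup>2 * g)
      / (Lg + N * F + (N * m - \<alpha>) * g))) has_real_derivative
      w / N * (- (\<alpha> * (Lg + N * F)) / (Lg + N * F + (N * m - \<alpha>) * g))) (at \<tau>)"
    by (intro DERIV_cmult DERIV_cdivide) (auto intro!: derivative_eq_intros)
  moreover have "open ?S"
    by (intro open_Int open_Collect_neq continuous_intros)
  moreover have "\<tau> \<in> ?S" using assms(2,3) by simp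
  ultimately show ?thesis
    by (rule has_field_derivative_transform_within_open) (simp add: price_closed_form assms(1))
qed

theorem theorem3:
  fixes N m F \<alpha> w g \<tau> Lg :: real
  assumes "N > 0" "m > 0" "F > 0" "\<alpha> > 0" "w > 0" "N * m > \<alpha>"
    and "g \<ge> 0" "0 < \<tau>" "\<tau> < 1" "Lg \<ge> 0"
  shows "(\<exists>D. ((\<lambda>x. price N m F \<alpha> w x \<tau> Lg) has_real_derivative D) (at g) \<and> D > 0)
       \<and> (\<exists>D. ((\<lambda>t. price N m F \<alpha> w g t Lg) has_real_derivative D) (at \<tau>) \<and> D < 0)
       \<and> (\<exists>D. ((\<lambda>l. price N m F \<alpha> w g \<tau> l) has_real_derivative D) (at Lg) \<and> D \<le> 0)"
proof -
  have "N \<noteq> 0" using assms(1) by simp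
  have D: "\<alpha> + (N * m - \<alpha>) * \<tau> > 0" using assms by (simp add: add_pos_nonneg)
  have B: "N * m + \<alpha> * (1 - \<tau>) > 0" using assms by (simp add: add_pos_nonneg)
  have K: "Lg + N * F > 0" using assms by (simp add: add_nonneg_pos)
  have den: "Lg + N * F + (N * m - \<alpha>) * g > 0" using K assms by (simp add: add_pos_nonneg)
  note derivatives = price_has_derivative_gov_purchase price_has_derivative_tax_rate
    price_has_derivative_gov_employment
  show ?thesis
  proof (intro conjI exI)
    show "w / N * (\<alpha> * (\<alpha> + (N * m - \<alpha>) * \<tau>) * (Lg + N * F) / (Lg + N * F + (N * m - \<alpha>) * g)\<^sup>2) > 0"
      using assms(1,4,5) D K den by (intro mult_pos_pos divide_pos_pos) auto
    show "w / N * (- (\<alpha> * (Lg + N * F)) / (Lg + N * F + (N * m - \<alpha>) * g)) < 0"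
      using assms(1,4,5) K den by (simp add: mult_pos_neg)
    show "w / N * (- (\<alpha> * (\<alpha> + (N * m - \<alpha>) * \<tau>) * g) / (Lg + N * F + (N * m - \<alpha>) * g)\<^sup>2) \<le> 0"
      using assms(1,4,5,7) D by (simp add: mult_pos_neg divide_le_0_iff)
  qed (use derivatives \<open>N \<noteq> 0\<close> D B den in auto)
qed

end
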